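(* Let $m\ge2$ and let $\mathbb N$ be the directed cycle $1\to2\to\cdots\to m\to1$, where agent $i$ receives $C_ix_{i-1}$ from agent $i-1$ (vertex $0$ being vertex $m$, $x_0:=x_m$), each $C_i$ a real full-row-rank matrix with $n$ columns, and $P_i=C_i'(C_iC_i')^{-1}C_i$. Consider $$x_i(t+1)=x_i(t)-\tfrac12P_i\big(x_i(t)-x_{i-1}(t)\big),\qquad i=1,\dots,m,$$ with initial states satisfying $x_i(0)\in\operatorname{image}P_i$ for every $i$. Then all $x_i(t)$ converge to a common vector $x^*\in\mathbb R^n$ exponentially fast.
   Context: $'$ denotes transpose; $P_i$ is the orthogonal projection onto $(\ker C_i)^\perp$. Exponentially fast: there exist $c>0$, $\rho\in[0,1)$ with $\|x_i(t)-x^*\|\le c\rho^t$ for all $i,t$. *)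

theory Defs
  imports "Jordan_Normal_Form.DL_Rank" "Jordan_Normal_Form.Gauss_Jordan_Elimination"
begin

definition full_row_rank :: "real mat \<Rightarrow> bool" where
  "full_row_rank C \<longleftrightarrow> vec_space.rank (dim_row C) C = dim_row C"

definition proj_mat :: "real mat \<Rightarrow> real mat" where
  "proj_mat C = transpose_mat C * the (mat_inverse (C * transpose_mat C)) * C"

definition mat_image :: "real mat \<Rightarrow> real vec set" where
  "mat_image P = {P *\<^sub>v y | y. y \<in> carrier_vec (dim_col P)}"

definition vnorm :: "real vec \<Rightarrow> real" where
  "vnorm v = sqrt (\<Sum>j<dim_vec v. (v $ j)\<^sup>2)"

definition cyc_prev :: "nat \<Rightarrow> nat \<Rightarrow> nat" where
  "cyc_prev m i = (if i = 1 then m else i - 1)"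

end

theory Submission imports Defs "HOL-Analysis.Function_Topology" begin

text \<open>Since every state \<open>x\<^sub>i\<close> stays in the range of \<open>P\<^sub>i\<close>, one step \<open>u \<mapsto> T u\<close> of the
  iteration satisfies the energy identity
  \<open>\<Sum>\<^sub>i \<parallel>(T u)\<^sub>i\<parallel>\<^sup>2 = \<Sum>\<^sub>i \<parallel>u\<^sub>i\<parallel>\<^sup>2 - \<onequarter>\<Sum>\<^sub>i (\<parallel>u\<^sub>i - u\<^sub>i\<^sub>-\<^sub>1\<parallel>\<^sup>2 + \<parallel>u\<^sub>i\<^sub>-\<^sub>1 - P\<^sub>i u\<^sub>i\<^sub>-\<^sub>1\<parallel>\<^sup>2)\<close>.
  The increments \<open>x(t+1) - x(t)\<close> lie in the \<open>T\<close>-invariant subspace of range-compatible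
  states whose components sum to a vector orthogonal to the common fixed space of the \<open>P\<^sub>i\<close>.
  On that subspace the dissipation vanishes only at \<open>0\<close>, so by compactness of the unit sphere
  it dominates a fixed multiple of the energy: the increments decay geometrically. Hence the
  states converge geometrically; the limit is a fixed point of \<open>T\<close>, has zero dissipation and
  is therefore a consensus.\<close>

lemma transpose_mult_vec_eq_0_imp_eq_0:
  fixes C :: "real mat"
  assumes C: "C \<in> carrier_mat r n" and rank: "vec_space.rank r C = r"
    and v: "v \<in> carrier_vec r" and Cv: "transpose_mat C *\<^sub>v v = 0\<^sub>v n"
  shows "v = 0\<^sub>v r"
proof -
  interpret vec_space "TYPE(real)" r .
  obtain S where S: "finite S" "maximal S (\<lambda>T. T \<subseteq> set (cols C) \<and> lin_indpt T)"
    using maximal_exists_superset[of "set (cols C)" "\<lambda>T. T \<subseteq> set (cols C) \<and> lin_indpt T" "{}"]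
    by (metis (no_types) List.finite_set empty_subsetI fin_dim finite_basis_exists
        subset_li_is_li vec_vs vectorspace.basis_def)
  have card_S: "card S = r" using rank_card_indpt[OF C S(2)] rank by simp
  have S_cols: "S \<subseteq> set (cols C)" "lin_indpt S" using S(2) unfolding maximal_def by auto
  have S_carrier: "S \<subseteq> carrier_vec r" using S_cols(1) C cols_dim by blast
  have "basis S"
    by (rule dim_li_is_basis[OF fin_dim S(1)]) (use S_carrier S_cols card_S dim_is_n in auto)
  then have span_S: "span S = carrier_vec r" unfolding basis_def by auto
  have "v \<in> orthogonal_complement S"
    unfolding orthogonal_complement_def
  proof (intro CollectI conjI ballI)
    show "v \<in> carrier_vec r" by fact
    fix y assume "y \<in> S"
    then obtain j where "j < dim_col C" "y = col C j" using S_cols(1) by (auto simp: cols_def)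
    then have j: "j < n" "y = col C j" using C by auto
    have "col C j \<bullet> v = (transpose_mat C *\<^sub>v v) $ j" using j C by auto
    then show "v \<bullet> y = 0" using j C v Cv comm_scalar_prod[of v r "col C j"] by auto
  qed
  then have "v \<in> orthogonal_complement (span S)" using S_carrier by simp
  then have "v \<bullet> v = 0" using v span_S unfolding orthogonal_complement_def by auto
  then show ?thesis using conjugate_square_eq_0_vec[OF v] by simp
qed

lemma gram_mat_inverse:
  fixes C :: "real mat"
  assumes C: "C \<in> carrier_mat r n" and rank: "full_row_rank C"
  obtains B where "mat_inverse (C * transpose_mat C) = Some B" "B \<in> carrier_mat r r"
    "C * transpose_mat C * B = 1\<^sub>m r" "transpose_mat B = B"
proof -
  define G where "G = C * transpose_mat C"
  have G: "G \<in> carrier_mat r r" using C unfolding G_def by auto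
  have G_sym: "transpose_mat G = G"
    unfolding G_def using C by (simp add: transpose_mult[of C r n "transpose_mat C" r])
  have "det G \<noteq> 0"
  proof
    assume "det G = 0"
    then obtain v where v: "v \<in> carrier_vec r" "v \<noteq> 0\<^sub>v r" "G *\<^sub>v v = 0\<^sub>v r"
      using det_0_iff_vec_prod_zero_field[OF G] by auto
    have w: "transpose_mat C *\<^sub>v v \<in> carrier_vec n" using C v by auto
    have "(transpose_mat C *\<^sub>v v) \<bullet> (transpose_mat C *\<^sub>v v) = v \<bullet> (C *\<^sub>v (transpose_mat C *\<^sub>v v))"
      by (rule transpose_vec_mult_scalar[OF C w v(1)])
    also have "C *\<^sub>v (transpose_mat C *\<^sub>v v) = G *\<^sub>v v"
      unfolding G_def using C v by (simp add: assoc_mult_mat_vec[of C r n "transpose_mat C" r v])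
    finally have "transpose_mat C *\<^sub>v v = 0\<^sub>v n"
      using v conjugate_square_eq_0_vec[OF w] by simp
    then show False
      using transpose_mult_vec_eq_0_imp_eq_0[OF C _ v(1)] rank C v(2)
      unfolding full_row_rank_def by auto
  qed
  then have "G \<in> Units (ring_mat TYPE(real) r ())" using det_non_zero_imp_unit[OF G] by auto
  then obtain B where B: "mat_inverse G = Some B" using mat_inverse(1)[OF G] by fastforce
  then have GB: "G * B = 1\<^sub>m r" "B * G = 1\<^sub>m r" "B \<in> carrier_mat r r"
    using mat_inverse(2)[OF G] by auto
  have "transpose_mat B * G = 1\<^sub>m r"
    using transpose_mult[OF G GB(3)] GB G_sym by (metis transpose_one)
  then have "transpose_mat B = B"
    using GB G by (metis assoc_mult_mat left_mult_one_mat right_mult_one_mat transpose_carrier_mat)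
  then show thesis using that B GB unfolding G_def by blast
qed

lemma
  fixes C :: "real mat"
  assumes C: "C \<in> carrier_mat r n" and rank: "full_row_rank C"
  shows proj_mat_carrier: "proj_mat C \<in> carrier_mat n n"
    and proj_mat_symmetric: "transpose_mat (proj_mat C) = proj_mat C"
    and proj_mat_idempotent: "proj_mat C * proj_mat C = proj_mat C"
proof -
  obtain B where B: "mat_inverse (C * transpose_mat C) = Some B" "B \<in> carrier_mat r r"
    "C * transpose_mat C * B = 1\<^sub>m r" "transpose_mat B = B"
    using gram_mat_inverse[OF C rank] .
  define M where "M = transpose_mat C * B"
  have M: "M \<in> carrier_mat n r" unfolding M_def using C B by auto
  have P: "proj_mat C = M * C" unfolding proj_mat_def M_def using B by simp
  show "proj_mat C \<in> carrier_mat n n" unfolding P using M C by auto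
  show "transpose_mat (proj_mat C) = proj_mat C"
  proof -
    have "transpose_mat M = B * C"
      unfolding M_def using transpose_mult[of "transpose_mat C" n r B r] C B by simp
    then have "transpose_mat (M * C) = transpose_mat C * (B * C)"
      using transpose_mult[OF M C] by simp
    then show ?thesis unfolding P M_def using C B by (simp add: assoc_mult_mat[of _ n r _ r _ n])
  qed
  have CM: "C * M = 1\<^sub>m r" unfolding M_def using C B by (metis assoc_mult_mat transpose_carrier_mat)
  have "M * C * (M * C) = M * ((C * M) * C)" using M C by (simp add: assoc_mult_mat[of _ n r _ n _ n])
  also have "\<dots> = M * C" using CM C by simp
  finally show "proj_mat C * proj_mat C = proj_mat C" unfolding P .
qed

lemma mult_mat_vec_index_sum:
  fixes P :: "'a :: semiring_0 mat"
  assumes "P \<in> carrier_mat k n" "v \<in> carrier_vec n" "j < k"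
  shows "(P *\<^sub>v v) $ j = (\<Sum>l<n. P $$ (j, l) * v $ l)"
  using assms by (simp add: scalar_prod_def atLeast0LessThan)


text \<open>Vectors of \<open>\<real>\<^sup>n\<close> and \<open>n \<times> n\<close> matrices are encoded as functions on indices below \<open>n\<close>,
  so that sets of states are subsets of a product topology and closedness and continuity
  come for free.\<close>

definition fun_dot :: "nat \<Rightarrow> (nat \<Rightarrow> real) \<Rightarrow> (nat \<Rightarrow> real) \<Rightarrow> real" where
  "fun_dot n a b = (\<Sum>j<n. a j * b j)"

abbreviation fun_sqnorm :: "nat \<Rightarrow> (nat \<Rightarrow> real) \<Rightarrow> real" where
  "fun_sqnorm n a \<equiv> fun_dot n a a"

definition fun_mult :: "nat \<Rightarrow> (nat \<Rightarrow> nat \<Rightarrow> real) \<Rightarrow> (nat \<Rightarrow> real) \<Rightarrow> nat \<Rightarrow> real" where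
  "fun_mult n q a j = (\<Sum>l<n. q j l * a l)"

lemma fun_dot_cong:
  "(\<And>j. j < n \<Longrightarrow> a j = a' j) \<Longrightarrow> (\<And>j. j < n \<Longrightarrow> b j = b' j) \<Longrightarrow> fun_dot n a b = fun_dot n a' b'"
  unfolding fun_dot_def by (rule sum.cong) auto

lemma fun_dot_commute: "fun_dot n a b = fun_dot n b a"
  unfolding fun_dot_def by (simp add: mult.commute)

lemma fun_dot_diff_left: "fun_dot n (\<lambda>j. a j - b j) d = fun_dot n a d - fun_dot n b d"
  unfolding fun_dot_def by (simp add: sum_subtractf algebra_simps)

lemma fun_dot_scale_left: "fun_dot n (\<lambda>j. c * a j) d = c * fun_dot n a d"
  unfolding fun_dot_def by (simp add: sum_distrib_left mult_ac)

lemma fun_sqnorm_scale: "fun_sqnorm n (\<lambda>j. c * a j) = c\<^sup>2 * fun_sqnorm n a"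
  unfolding fun_dot_def by (simp add: sum_distrib_left power2_eq_square mult_ac)

lemma fun_sqnorm_nonneg: "fun_sqnorm n a \<ge> 0"
  unfolding fun_dot_def by (auto intro: sum_nonneg)

lemma fun_sqnorm_eq_0D: "fun_sqnorm n a = 0 \<Longrightarrow> j < n \<Longrightarrow> a j = 0"
  unfolding fun_dot_def by (subst (asm) sum_nonneg_eq_0_iff) auto

lemma fun_mult_cong: "(\<And>l. l < n \<Longrightarrow> a l = a' l) \<Longrightarrow> fun_mult n q a j = fun_mult n q a' j"
  unfolding fun_mult_def by (rule sum.cong) auto

lemma fun_mult_diff: "fun_mult n q (\<lambda>l. a l - b l) j = fun_mult n q a j - fun_mult n q b j"
  unfolding fun_mult_def by (simp add: sum_subtractf algebra_simps)

lemma fun_mult_add: "fun_mult n q (\<lambda>l. a l + b l) j = fun_mult n q a j + fun_mult n q b j"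
  unfolding fun_mult_def by (simp add: sum.distrib algebra_simps)

lemma fun_mult_scale: "fun_mult n q (\<lambda>l. c * a l) j = c * fun_mult n q a j"
  unfolding fun_mult_def by (simp add: sum_distrib_left mult_ac)

lemma fun_dot_mult_symmetric:
  assumes "\<And>j l. j < n \<Longrightarrow> l < n \<Longrightarrow> q j l = q l j"
  shows "fun_dot n a (fun_mult n q b) = fun_dot n (fun_mult n q a) b"
proof -
  have "fun_dot n a (fun_mult n q b) = (\<Sum>j<n. \<Sum>l<n. a j * q j l * b l)"
    unfolding fun_dot_def fun_mult_def by (simp add: sum_distrib_left mult.assoc)
  also have "\<dots> = (\<Sum>l<n. \<Sum>j<n. q l j * a j * b l)"
    by (subst sum.swap) (intro sum.cong refl, simp add: assms)
  also have "\<dots> = fun_dot n (fun_mult n q a) b"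
    unfolding fun_dot_def fun_mult_def by (simp add: sum_distrib_right)
  finally show ?thesis .
qed

lemma fun_mult_idempotent:
  assumes "\<And>j k. j < n \<Longrightarrow> k < n \<Longrightarrow> (\<Sum>l<n. q j l * q l k) = q j k" and j: "j < n"
  shows "fun_mult n q (fun_mult n q b) j = fun_mult n q b j"
proof -
  have "fun_mult n q (fun_mult n q b) j = (\<Sum>k<n. \<Sum>l<n. q j l * q l k * b k)"
    unfolding fun_mult_def by (subst sum.swap) (simp add: sum_distrib_left mult.assoc)
  also have "\<dots> = (\<Sum>k<n. q j k * b k)"
    by (intro sum.cong refl) (simp add: assms j flip: sum_distrib_right)
  finally show ?thesis unfolding fun_mult_def .
qed

lemma fun_sqnorm_diff:
  "fun_sqnorm n (\<lambda>j. a j - b j) = fun_sqnorm n a - 2 * fun_dot n a b + fun_sqnorm n b"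
proof -
  have "fun_sqnorm n (\<lambda>j. a j - b j) = (\<Sum>j<n. a j * a j - 2 * (a j * b j) + b j * b j)"
    unfolding fun_dot_def by (rule sum.cong) (simp_all add: algebra_simps)
  then show ?thesis
    unfolding fun_dot_def by (simp add: sum.distrib sum_subtractf sum_distrib_left)
qed

lemma fun_sqnorm_midpoint_projection:
  assumes sym: "\<And>j l. j < n \<Longrightarrow> l < n \<Longrightarrow> q j l = q l j"
    and idem: "\<And>j k. j < n \<Longrightarrow> k < n \<Longrightarrow> (\<Sum>l<n. q j l * q l k) = q j k"
    and a: "\<And>j. j < n \<Longrightarrow> fun_mult n q a j = a j"
  shows "fun_sqnorm n (\<lambda>j. a j / 2 + fun_mult n q b j / 2)
     = fun_sqnorm n a / 2 + fun_sqnorm n b / 2 - fun_sqnorm n (\<lambda>j. a j - b j) / 4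
       - fun_sqnorm n (\<lambda>j. b j - fun_mult n q b j) / 4"
proof -
  define Qb where "Qb = fun_mult n q b"
  have "fun_dot n a Qb = fun_dot n (fun_mult n q a) b"
    unfolding Qb_def by (rule fun_dot_mult_symmetric[OF sym])
  also have "\<dots> = fun_dot n a b" by (rule fun_dot_cong) (auto simp: a)
  finally have aQb: "fun_dot n a Qb = fun_dot n a b" .
  have "fun_sqnorm n Qb = fun_dot n (fun_mult n q Qb) b"
    unfolding Qb_def by (rule fun_dot_mult_symmetric[OF sym])
  also have "\<dots> = fun_dot n b Qb"
    unfolding Qb_def by (subst fun_dot_commute) (rule fun_dot_cong, simp_all add: fun_mult_idempotent[OF idem])
  finally have QbQb: "fun_sqnorm n Qb = fun_dot n b Qb" .
  have "fun_sqnorm n (\<lambda>j. a j / 2 + Qb j / 2)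
      = fun_sqnorm n a / 4 + fun_dot n a Qb / 2 + fun_sqnorm n Qb / 4"
  proof -
    have "fun_sqnorm n (\<lambda>j. a j / 2 + Qb j / 2)
       = (\<Sum>j<n. a j * a j / 4 + a j * Qb j / 2 + Qb j * Qb j / 4)"
      unfolding fun_dot_def by (rule sum.cong) (simp_all add: algebra_simps)
    then show ?thesis unfolding fun_dot_def by (simp add: sum.distrib sum_divide_distrib)
  qed
  then show ?thesis using aQb QbQb fun_sqnorm_diff[of n a b] fun_sqnorm_diff[of n b Qb]
    unfolding Qb_def[symmetric] by (simp add: algebra_simps fun_dot_commute[of n Qb b])
qed


lemma compact_fun_unit_sphere:
  fixes K :: "'k set"
  assumes "finite K"
  shows "compact {f :: 'k \<Rightarrow> real. (\<forall>k. k \<notin> K \<longrightarrow> f k = 0) \<and> (\<Sum>k\<in>K. (f k)\<^sup>2) = 1}"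
    (is "compact ?S")
proof -
  define B where "B = PiE UNIV (\<lambda>k. if k \<in> K then {-1..1::real} else {0})"
  have "compactin (product_topology (\<lambda>_. euclideanreal) UNIV) B"
    unfolding B_def by (subst compactin_PiE) auto
  then have "compact B" by (simp add: euclidean_product_topology compactin_euclidean_iff)
  moreover have "?S \<subseteq> B"
  proof
    fix f assume f: "f \<in> ?S"
    have "\<bar>f k\<bar> \<le> 1" if k: "k \<in> K" for k
    proof -
      have "(f k)\<^sup>2 \<le> (\<Sum>k\<in>K. (f k)\<^sup>2)" by (rule member_le_sum) (use k assms in auto)
      then show ?thesis using f by (simp add: abs_square_le_1)
    qed
    then show "f \<in> B" using f unfolding B_def by (auto simp: abs_le_iff)
  qed
  moreover have "closed ?S"
  proof -
    have "closed {f :: 'k \<Rightarrow> real. k \<notin> K \<longrightarrow> f k = 0}" for k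
      by (cases "k \<in> K") (auto intro!: closed_Collect_eq continuous_on_product_coordinates)
    then have "closed {f :: 'k \<Rightarrow> real. \<forall>k. k \<notin> K \<longrightarrow> f k = 0}" by (rule closed_Collect_all)
    moreover have "closed {f :: 'k \<Rightarrow> real. (\<Sum>k\<in>K. (f k)\<^sup>2) = 1}"
      by (rule closed_Collect_eq) (auto intro!: continuous_intros continuous_on_product_coordinates)
    ultimately show ?thesis by (simp add: Collect_conj_eq closed_Int)
  qed
  ultimately show ?thesis using compact_Int_closed[of B ?S] by (simp add: Int_absorb1)
qed

lemma quadratic_coercive_on_closed_cone:
  fixes D :: "('k \<Rightarrow> real) \<Rightarrow> real" and Z :: "('k \<Rightarrow> real) set"
  assumes K: "finite K" and Z: "closed Z" and D: "continuous_on UNIV D"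
    and cone: "\<And>f c. f \<in> Z \<Longrightarrow> (\<lambda>k. c * f k) \<in> Z"
    and homogeneous: "\<And>f c. D (\<lambda>k. c * f k) = c\<^sup>2 * D f"
    and pos: "\<And>f. f \<in> Z \<Longrightarrow> \<forall>k. k \<notin> K \<longrightarrow> f k = 0 \<Longrightarrow> (\<Sum>k\<in>K. (f k)\<^sup>2) = 1 \<Longrightarrow> D f > 0"
  shows "\<exists>e>0. \<forall>f\<in>Z. (\<forall>k. k \<notin> K \<longrightarrow> f k = 0) \<longrightarrow> e * (\<Sum>k\<in>K. (f k)\<^sup>2) \<le> D f"
proof -
  define S where "S = Z \<inter> {f. (\<forall>k. k \<notin> K \<longrightarrow> f k = 0) \<and> (\<Sum>k\<in>K. (f k)\<^sup>2) = 1}"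
  have "compact S" unfolding S_def by (rule closed_Int_compact[OF Z compact_fun_unit_sphere[OF K]])
  obtain e where e: "e > 0" "\<And>f. f \<in> S \<Longrightarrow> e \<le> D f"
  proof (cases "S = {}")
    case False
    obtain f0 where "f0 \<in> S" "\<forall>f\<in>S. D f0 \<le> D f"
      using continuous_attains_inf[OF \<open>compact S\<close> False continuous_on_subset[OF D]] by auto
    then show thesis using that[of "D f0"] pos unfolding S_def by auto
  qed (use that[of 1] in auto)
  show ?thesis
  proof (intro exI[of _ e] conjI ballI impI)
    show "e > 0" by fact
    fix f assume f: "f \<in> Z" "\<forall>k. k \<notin> K \<longrightarrow> f k = 0"
    define N where "N = (\<Sum>k\<in>K. (f k)\<^sup>2)"
    show "e * (\<Sum>k\<in>K. (f k)\<^sup>2) \<le> D f"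
    proof (cases "N = 0")
      case True
      then have "\<forall>k\<in>K. f k = 0" using K unfolding N_def by (simp add: sum_nonneg_eq_0_iff)
      then have "f = (\<lambda>k. 0 * f k)" using f(2) by auto
      then have "D f = 0" using homogeneous[of 0 f] by simp
      then show ?thesis using True unfolding N_def by simp
    next
      case False
      then have N: "N > 0" unfolding N_def by (simp add: order_le_neq_trans sum_nonneg)
      define c where "c = 1 / sqrt N"
      have "(\<Sum>k\<in>K. (c * f k)\<^sup>2) = c\<^sup>2 * N"
        unfolding N_def by (simp add: power_mult_distrib sum_distrib_left)
      also have "\<dots> = 1" unfolding c_def using N by (simp add: power_divide)
      finally have "(\<lambda>k. c * f k) \<in> S" using cone[OF f(1)] f(2) unfolding S_def by simp
      then have "e \<le> D (\<lambda>k. c * f k)" by (rule e(2))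
      then have "e \<le> c\<^sup>2 * D f" by (simp only: homogeneous)
      then show ?thesis using N unfolding c_def N_def[symmetric] by (simp add: power_divide field_simps)
    qed
  qed
qed

lemma geometric_increments_imp_geometric_convergence:
  fixes s :: "nat \<Rightarrow> real"
  assumes r: "0 \<le> r" "r < 1" and d: "\<And>t. \<bar>s (Suc t) - s t\<bar> \<le> c * r ^ t"
  shows "\<exists>l. \<forall>t. \<bar>s t - l\<bar> \<le> c / (1 - r) * r ^ t"
proof -
  define d where "d t = s (Suc t) - s t" for t
  have "summable (\<lambda>t. c * r ^ t)" using r by (intro summable_mult summable_geometric) auto
  then have "summable d" by (rule summable_comparison_test[rotated]) (use d in \<open>auto simp: d_def\<close>)
  have "\<bar>s t - (s 0 + suminf d)\<bar> \<le> c / (1 - r) * r ^ t" for t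
  proof -
    have "suminf d = (\<Sum>k. d (k + t)) + (\<Sum>k<t. d k)"
      by (rule suminf_split_initial_segment[OF \<open>summable d\<close>])
    moreover have "s t = s 0 + (\<Sum>k<t. d k)" unfolding d_def by (simp add: sum_lessThan_telescope)
    ultimately have e: "s t - (s 0 + suminf d) = - (\<Sum>k. d (k + t))" by simp
    have sd: "summable (\<lambda>k. d (k + t))" using \<open>summable d\<close> by (rule summable_ignore_initial_segment)
    have sg: "summable (\<lambda>k. c * r ^ t * r ^ k)" using r by (intro summable_mult summable_geometric) auto
    have g: "(\<Sum>k. c * r ^ t * r ^ k) = c * r ^ t / (1 - r)"
      using r by (simp add: suminf_mult suminf_geometric)
    have b: "\<bar>d (k + t)\<bar> \<le> c * r ^ t * r ^ k" for k
      using d[of "k + t"] unfolding d_def by (simp add: power_add mult_ac)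
    have "(\<Sum>k. d (k + t)) \<le> (\<Sum>k. c * r ^ t * r ^ k)"
      by (rule suminf_le[OF _ sd sg]) (use b in \<open>auto simp: abs_le_iff\<close>)
    moreover have "(\<Sum>k. - (c * r ^ t * r ^ k)) \<le> (\<Sum>k. d (k + t))"
      by (rule suminf_le[OF _ summable_minus[OF sg] sd]) (metis abs_le_iff b minus_le_iff)
    ultimately show ?thesis using e g by (simp add: suminf_minus[OF sg] abs_le_iff)
  qed
  then show ?thesis by blast
qed

lemma LIMSEQ_of_geometric_bound:
  fixes s :: "nat \<Rightarrow> real"
  assumes "0 \<le> r" "r < 1" and "\<And>t. \<bar>s t - l\<bar> \<le> c * r ^ t"
  shows "s \<longlonglongrightarrow> l"
proof -
  have "(\<lambda>t. c * r ^ t) \<longlonglongrightarrow> 0"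
    using assms(1,2) by (auto intro!: tendsto_mult_right_zero LIMSEQ_power_zero)
  then have "(\<lambda>t. \<bar>s t - l\<bar>) \<longlonglongrightarrow> 0"
    by (rule tendsto_sandwich[rotated 2, OF tendsto_const]) (use assms(3) in \<open>auto intro!: always_eventually\<close>)
  then show ?thesis by (simp add: LIM_zero_iff tendsto_rabs_zero_iff)
qed


text \<open>\<open>p i\<close> is the matrix of the projection \<open>P\<^sub>i\<close>; a state \<open>u\<close> assigns the vector \<open>u i\<close>
  to agent \<open>i\<close>.\<close>

locale cyclic_projections =
  fixes n m :: nat and p :: "nat \<Rightarrow> nat \<Rightarrow> nat \<Rightarrow> real"
  assumes two_le_m: "2 \<le> m"
    and p_symmetric: "\<And>i j l. i \<in> {1..m} \<Longrightarrow> j < n \<Longrightarrow> l < n \<Longrightarrow> p i j l = p i l j"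
    and p_idempotent:
      "\<And>i j k. i \<in> {1..m} \<Longrightarrow> j < n \<Longrightarrow> k < n \<Longrightarrow> (\<Sum>l<n. p i j l * p i l k) = p i j k"
begin

abbreviation agents :: "nat set" where "agents \<equiv> {1..m}"

abbreviation prev :: "nat \<Rightarrow> nat" where "prev \<equiv> cyc_prev m"

definition in_ranges :: "(nat \<Rightarrow> nat \<Rightarrow> real) \<Rightarrow> bool" where
  "in_ranges u \<longleftrightarrow> (\<forall>i\<in>agents. \<forall>j<n. fun_mult n (p i) (u i) j = u i j)"

definition supported :: "(nat \<Rightarrow> nat \<Rightarrow> real) \<Rightarrow> bool" where
  "supported u \<longleftrightarrow> (\<forall>i j. \<not> (i \<in> agents \<and> j < n) \<longrightarrow> u i j = 0)"

definition common_fixed :: "(nat \<Rightarrow> real) set" where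
  "common_fixed = {d. \<forall>i\<in>agents. \<forall>j<n. fun_mult n (p i) d j = d j}"

definition balanced :: "(nat \<Rightarrow> nat \<Rightarrow> real) \<Rightarrow> bool" where
  "balanced u \<longleftrightarrow> in_ranges u \<and> (\<forall>d\<in>common_fixed. (\<Sum>i\<in>agents. fun_dot n (u i) d) = 0)"

definition step :: "(nat \<Rightarrow> nat \<Rightarrow> real) \<Rightarrow> nat \<Rightarrow> nat \<Rightarrow> real" where
  "step u = (\<lambda>i j. if i \<in> agents \<and> j < n
     then u i j - 1/2 * fun_mult n (p i) (\<lambda>l. u i l - u (prev i) l) j else 0)"

definition energy :: "(nat \<Rightarrow> nat \<Rightarrow> real) \<Rightarrow> real" where
  "energy u = (\<Sum>i\<in>agents. fun_sqnorm n (u i))"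

definition dissipation :: "(nat \<Rightarrow> nat \<Rightarrow> real) \<Rightarrow> real" where
  "dissipation u = (\<Sum>i\<in>agents. fun_sqnorm n (\<lambda>j. u i j - u (prev i) j)
      + fun_sqnorm n (\<lambda>j. u (prev i) j - fun_mult n (p i) (u (prev i)) j))"

lemma prev_in_agents: "i \<in> agents \<Longrightarrow> prev i \<in> agents"
  using two_le_m unfolding cyc_prev_def by auto

lemma sum_agents_prev: "(\<Sum>i\<in>agents. g (prev i)) = (\<Sum>i\<in>agents. g i)"
proof (rule sum.reindex_bij_betw, rule bij_betw_imageI)
  show "inj_on prev agents" unfolding inj_on_def cyc_prev_def using two_le_m by auto
  have "k \<in> prev ` agents" if "k \<in> agents" for k
  proof (cases "k = m")
    case True
    then have "k = prev 1" "1 \<in> agents" using two_le_m unfolding cyc_prev_def by auto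
    then show ?thesis by blast
  next
    case False
    then have "k = prev (k + 1)" "k + 1 \<in> agents" using that unfolding cyc_prev_def by auto
    then show ?thesis by blast
  qed
  then show "prev ` agents = agents" using prev_in_agents by blast
qed

lemma step_eq_midpoint:
  "in_ranges u \<Longrightarrow> i \<in> agents \<Longrightarrow> j < n \<Longrightarrow>
    step u i j = u i j / 2 + fun_mult n (p i) (u (prev i)) j / 2"
  unfolding step_def in_ranges_def by (simp add: fun_mult_diff field_simps)

lemma supported_step: "supported (step u)"
  unfolding supported_def step_def by auto

lemma in_ranges_step:
  assumes "in_ranges u" shows "in_ranges (step u)"
  unfolding in_ranges_def
proof (intro ballI allI impI)
  fix i j assume i: "i \<in> agents" and j: "j < n"
  have "fun_mult n (p i) (step u i) j
      = fun_mult n (p i) (\<lambda>l. 1/2 * u i l + 1/2 * fun_mult n (p i) (u (prev i)) l) j"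
    by (rule fun_mult_cong) (simp add: step_eq_midpoint[OF assms i])
  also have "\<dots> = 1/2 * u i j + 1/2 * fun_mult n (p i) (u (prev i)) j"
    using assms i j fun_mult_idempotent[of n "p i" j "u (prev i)"] p_idempotent[OF i]
    unfolding in_ranges_def by (simp only: fun_mult_add fun_mult_scale)
  finally show "fun_mult n (p i) (step u i) j = step u i j" using step_eq_midpoint[OF assms i j] by simp
qed

lemma energy_nonneg: "energy u \<ge> 0"
  unfolding energy_def by (auto intro: sum_nonneg fun_sqnorm_nonneg)

lemma dissipation_nonneg: "dissipation u \<ge> 0"
  unfolding dissipation_def by (auto intro!: sum_nonneg add_nonneg_nonneg fun_sqnorm_nonneg)

lemma energy_step:
  assumes "in_ranges u" shows "energy (step u) = energy u - dissipation u / 4"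
proof -
  have "energy (step u) = (\<Sum>i\<in>agents. fun_sqnorm n (u i) / 2 + fun_sqnorm n (u (prev i)) / 2
      - fun_sqnorm n (\<lambda>j. u i j - u (prev i) j) / 4
      - fun_sqnorm n (\<lambda>j. u (prev i) j - fun_mult n (p i) (u (prev i)) j) / 4)"
    unfolding energy_def
  proof (intro sum.cong refl)
    fix i assume i: "i \<in> agents"
    have "fun_sqnorm n (step u i)
        = fun_sqnorm n (\<lambda>j. u i j / 2 + fun_mult n (p i) (u (prev i)) j / 2)"
      by (rule fun_dot_cong) (auto simp: step_eq_midpoint[OF assms i])
    also have "\<dots> = fun_sqnorm n (u i) / 2 + fun_sqnorm n (u (prev i)) / 2
      - fun_sqnorm n (\<lambda>j. u i j - u (prev i) j) / 4
      - fun_sqnorm n (\<lambda>j. u (prev i) j - fun_mult n (p i) (u (prev i)) j) / 4"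
      by (rule fun_sqnorm_midpoint_projection)
        (use i assms p_symmetric p_idempotent in \<open>auto simp: in_ranges_def\<close>)
    finally show "fun_sqnorm n (step u i) = \<dots>" .
  qed
  also have "\<dots> = energy u / 2 + (\<Sum>i\<in>agents. fun_sqnorm n (u (prev i))) / 2 - dissipation u / 4"
    unfolding energy_def dissipation_def
    by (simp add: sum_subtractf sum.distrib add_divide_distrib flip: sum_divide_distrib)
  also have "(\<Sum>i\<in>agents. fun_sqnorm n (u (prev i))) = energy u"
    unfolding energy_def by (rule sum_agents_prev)
  finally show ?thesis by simp
qed

lemma cycle_constant:
  assumes "\<And>i j. i \<in> agents \<Longrightarrow> j < n \<Longrightarrow> u i j = u (prev i) j"
  shows "i \<in> agents \<Longrightarrow> j < n \<Longrightarrow> u i j = u 1 j"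
proof (induction i)
  case (Suc k)
  show ?case
  proof (cases "k = 0")
    case False
    then have "prev (Suc k) = k" unfolding cyc_prev_def by simp
    then show ?thesis using Suc assms[of "Suc k" j] False by simp
  qed simp
qed simp

lemma
  assumes "dissipation u = 0"
  shows dissipation_eq_0_imp_constant: "\<And>i j. i \<in> agents \<Longrightarrow> j < n \<Longrightarrow> u i j = u 1 j"
    and dissipation_eq_0_imp_common_fixed: "u 1 \<in> common_fixed"
proof -
  have "fun_sqnorm n (\<lambda>j. u i j - u (prev i) j)
      + fun_sqnorm n (\<lambda>j. u (prev i) j - fun_mult n (p i) (u (prev i)) j) = 0" if "i \<in> agents" for i
    using assms that unfolding dissipation_def
    by (subst (asm) sum_nonneg_eq_0_iff) (auto intro!: add_nonneg_nonneg fun_sqnorm_nonneg)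
  then have terms: "fun_sqnorm n (\<lambda>j. u i j - u (prev i) j) = 0
      \<and> fun_sqnorm n (\<lambda>j. u (prev i) j - fun_mult n (p i) (u (prev i)) j) = 0" if "i \<in> agents" for i
    using that by (simp add: add_nonneg_eq_0_iff fun_sqnorm_nonneg)
  have adjacent: "u i j = u (prev i) j" if "i \<in> agents" "j < n" for i j
    using fun_sqnorm_eq_0D[OF conjunct1[OF terms[OF that(1)]] that(2)] by simp
  have fixed: "fun_mult n (p i) (u (prev i)) j = u (prev i) j" if "i \<in> agents" "j < n" for i j
    using fun_sqnorm_eq_0D[OF conjunct2[OF terms[OF that(1)]] that(2)] by simp
  show const: "\<And>i j. i \<in> agents \<Longrightarrow> j < n \<Longrightarrow> u i j = u 1 j"
    using adjacent by (rule cycle_constant)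
  show "u 1 \<in> common_fixed" unfolding common_fixed_def
  proof (intro CollectI ballI allI impI)
    fix i j assume i: "i \<in> agents" and j: "j < n"
    have "fun_mult n (p i) (u 1) j = fun_mult n (p i) (u (prev i)) j"
      by (rule fun_mult_cong) (metis const prev_in_agents[OF i])
    also have "\<dots> = u (prev i) j" using fixed[OF i j] .
    finally show "fun_mult n (p i) (u 1) j = u 1 j" by (metis const prev_in_agents[OF i] j)
  qed
qed

lemma balanced_dissipation_eq_0_imp_energy_eq_0:
  assumes "balanced u" "dissipation u = 0" shows "energy u = 0"
proof -
  note const = dissipation_eq_0_imp_constant[OF assms(2)]
  have "energy u = (\<Sum>i\<in>agents. fun_dot n (u i) (u 1))"
    unfolding energy_def by (intro sum.cong refl fun_dot_cong) (use const in blast)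
  also have "\<dots> = 0"
    using assms(1) dissipation_eq_0_imp_common_fixed[OF assms(2)] unfolding balanced_def by auto
  finally show ?thesis .
qed

lemma sum_dot_step:
  assumes u: "in_ranges u" and d: "d \<in> common_fixed"
  shows "(\<Sum>i\<in>agents. fun_dot n (step u i) d) = (\<Sum>i\<in>agents. fun_dot n (u i) d)"
proof -
  have "fun_dot n (step u i) d = fun_dot n (u i) d / 2 + fun_dot n (u (prev i)) d / 2"
    if i: "i \<in> agents" for i
  proof -
    have "fun_dot n (fun_mult n (p i) (u (prev i))) d = fun_dot n (u (prev i)) (fun_mult n (p i) d)"
      by (metis fun_dot_commute fun_dot_mult_symmetric p_symmetric[OF i])
    also have "\<dots> = fun_dot n (u (prev i)) d"
      by (rule fun_dot_cong) (use d i in \<open>auto simp: common_fixed_def\<close>)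
    finally have "fun_dot n (fun_mult n (p i) (u (prev i))) d = fun_dot n (u (prev i)) d" .
    moreover have "fun_dot n (step u i) d
        = fun_dot n (u i) d / 2 + fun_dot n (fun_mult n (p i) (u (prev i))) d / 2"
      unfolding fun_dot_def
      by (simp add: step_eq_midpoint[OF u i] sum_divide_distrib sum.distrib algebra_simps)
    ultimately show ?thesis by simp
  qed
  then have "(\<Sum>i\<in>agents. fun_dot n (step u i) d)
      = (\<Sum>i\<in>agents. fun_dot n (u i) d) / 2 + (\<Sum>i\<in>agents. fun_dot n (u (prev i)) d) / 2"
    by (simp add: sum.distrib sum_divide_distrib)
  also have "(\<Sum>i\<in>agents. fun_dot n (u (prev i)) d) = (\<Sum>i\<in>agents. fun_dot n (u i) d)"
    by (rule sum_agents_prev)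
  finally show ?thesis by simp
qed

lemma balanced_step: "balanced u \<Longrightarrow> balanced (step u)"
  unfolding balanced_def using in_ranges_step sum_dot_step by auto

lemma in_ranges_diff: "in_ranges a \<Longrightarrow> in_ranges b \<Longrightarrow> in_ranges (\<lambda>i j. a i j - b i j)"
  unfolding in_ranges_def by (simp add: fun_mult_diff)

lemma step_diff: "step (\<lambda>i j. a i j - b i j) = (\<lambda>i j. step a i j - step b i j)"
proof (intro ext)
  fix i j
  have "fun_mult n (p i) (\<lambda>l. a i l - b i l - (a (prev i) l - b (prev i) l)) j
      = fun_mult n (p i) (\<lambda>l. a i l - a (prev i) l) j - fun_mult n (p i) (\<lambda>l. b i l - b (prev i) l) j"
    by (simp add: fun_mult_diff)
  then show "step (\<lambda>i j. a i j - b i j) i j = step a i j - step b i j"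
    unfolding step_def by (simp add: algebra_simps)
qed

text \<open>The increment is \<open>T u - u = -\<onehalf>(P\<^sub>i(u\<^sub>i - u\<^sub>i\<^sub>-\<^sub>1))\<^sub>i\<close>; against a common fixed vector
  the \<open>P\<^sub>i\<close> disappear and the differences telescope around the cycle.\<close>

lemma balanced_increment:
  assumes "in_ranges u" shows "balanced (\<lambda>i j. step u i j - u i j)"
  unfolding balanced_def
  using in_ranges_diff[OF in_ranges_step[OF assms] assms] sum_dot_step[OF assms]
  by (simp add: fun_dot_diff_left sum_subtractf)

lemma dissipation_scale: "dissipation (\<lambda>i j. c * u i j) = c\<^sup>2 * dissipation u"
  unfolding dissipation_def fun_mult_scale right_diff_distrib[symmetric] fun_sqnorm_scale
  by (simp add: sum_distrib_left distrib_left)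

lemma balanced_scale: "balanced u \<Longrightarrow> balanced (\<lambda>i j. c * u i j)"
  unfolding balanced_def in_ranges_def
  by (simp add: fun_mult_scale fun_dot_scale_left flip: sum_distrib_left)

lemma dissipation_coercive:
  obtains e where "e > 0" "\<And>u. balanced u \<Longrightarrow> supported u \<Longrightarrow> e * energy u \<le> dissipation u"
proof -
  define K where "K = agents \<times> {..<n}"
  define Z where "Z = {f :: nat \<times> nat \<Rightarrow> real. balanced (curry f)}"
  have coord: "continuous_on UNIV (\<lambda>f :: nat \<times> nat \<Rightarrow> real. f k)" for k
    by (rule continuous_on_product_coordinates)
  have Z_eq: "Z = {f. \<forall>i. i \<in> agents \<longrightarrow> (\<forall>j. j < n \<longrightarrow> (\<Sum>l<n. p i j l * f (i, l)) = f (i, j))}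
     \<inter> {f. \<forall>d. d \<in> common_fixed \<longrightarrow> (\<Sum>i\<in>agents. \<Sum>j<n. f (i, j) * d j) = 0}"
    unfolding Z_def balanced_def in_ranges_def fun_mult_def fun_dot_def by auto
  have closed_Z: "closed Z" unfolding Z_eq
    by (intro closed_Int closed_Collect_all closed_Collect_imp open_Collect_const closed_Collect_eq)
      (auto intro!: continuous_intros coord)
  have continuous: "continuous_on UNIV (\<lambda>f :: nat \<times> nat \<Rightarrow> real. dissipation (curry f))"
    unfolding dissipation_def fun_dot_def fun_mult_def curry_def
    by (auto intro!: continuous_intros coord)
  have energy_curry: "energy (curry f) = (\<Sum>k\<in>K. (f k)\<^sup>2)" for f
    unfolding energy_def fun_dot_def K_def by (simp add: sum.cartesian_product power2_eq_square)
  have "\<exists>e>0. \<forall>f\<in>Z. (\<forall>k. k \<notin> K \<longrightarrow> f k = 0) \<longrightarrow>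
      e * (\<Sum>k\<in>K. (f k)\<^sup>2) \<le> dissipation (curry f)"
  proof (rule quadratic_coercive_on_closed_cone[OF _ closed_Z continuous])
    show "finite K" unfolding K_def by simp
    show "(\<lambda>k. c * f k) \<in> Z" if "f \<in> Z" for f c
      using balanced_scale[of "curry f" c] that unfolding Z_def by (simp add: curry_def)
    show "dissipation (curry (\<lambda>k. c * f k)) = c\<^sup>2 * dissipation (curry f)" for f c
      using dissipation_scale[of c "curry f"] by (simp add: curry_def)
    show "dissipation (curry f) > 0"
      if "f \<in> Z" "\<forall>k. k \<notin> K \<longrightarrow> f k = 0" "(\<Sum>k\<in>K. (f k)\<^sup>2) = 1" for f
      using that balanced_dissipation_eq_0_imp_energy_eq_0[of "curry f"] energy_curry[of f]
        dissipation_nonneg[of "curry f"] unfolding Z_def by fastforce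
  qed
  then obtain e where "e > 0"
    and e: "\<forall>f\<in>Z. (\<forall>k. k \<notin> K \<longrightarrow> f k = 0) \<longrightarrow> e * (\<Sum>k\<in>K. (f k)\<^sup>2) \<le> dissipation (curry f)"
    by blast
  show thesis
  proof (rule that[OF \<open>e > 0\<close>])
    fix u assume "balanced u" "supported u"
    then have "case_prod u \<in> Z" "\<forall>k. k \<notin> K \<longrightarrow> case_prod u k = 0"
      unfolding Z_def K_def supported_def by auto
    then show "e * energy u \<le> dissipation u" using e energy_curry[of "case_prod u"] by auto
  qed
qed

lemma component_sq_le_energy:
  assumes "i \<in> agents" "j < n" shows "(u i j)\<^sup>2 \<le> energy u"
proof -
  have "(u i j)\<^sup>2 \<le> fun_sqnorm n (u i)"
    unfolding fun_dot_def power2_eq_square by (rule member_le_sum) (use assms in auto)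
  also have "\<dots> \<le> energy u"
    unfolding energy_def by (rule member_le_sum) (use assms fun_sqnorm_nonneg in auto)
  finally show ?thesis .
qed

lemma in_ranges_iterates:
  assumes "in_ranges (X 0)" and "\<And>t. X (Suc t) = step (X t)" shows "in_ranges (X t)"
  by (induction t) (use assms in_ranges_step in auto)

lemma increments_decay:
  assumes X0: "in_ranges (X 0)" "supported (X 0)" and XS: "\<And>t. X (Suc t) = step (X t)"
  obtains c r where "0 \<le> c" "0 \<le> r" "r < 1"
    "\<And>t i j. i \<in> agents \<Longrightarrow> j < n \<Longrightarrow> \<bar>X (Suc t) i j - X t i j\<bar> \<le> c * r ^ t"
proof -
  define u where "u t = (\<lambda>i j. X (Suc t) i j - X t i j)" for t
  have u_Suc: "u (Suc t) = step (u t)" for t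
    unfolding u_def step_diff XS using in_ranges_iterates[OF X0(1) XS] by simp
  have balanced: "balanced (u t)" for t
    by (induction t) (use balanced_increment[OF X0(1)] XS balanced_step u_Suc in \<open>auto simp: u_def\<close>)
  have supported: "supported (u t)" for t
    using supported_step X0(2) XS unfolding u_def supported_def by (cases t) auto
  obtain e where e: "e > 0" "\<And>u. balanced u \<Longrightarrow> supported u \<Longrightarrow> e * energy u \<le> dissipation u"
    using dissipation_coercive by blast
  define q where "q = 1 - min e 1 / 4"
  have q: "0 \<le> q" "q < 1" unfolding q_def using e(1) by auto
  have decay: "energy (u (Suc t)) \<le> q * energy (u t)" for t
  proof -
    have "min e 1 * energy (u t) \<le> dissipation (u t)"
      using e(2)[OF balanced supported] energy_nonneg[of "u t"]
      by (meson min.cobounded1 mult_right_mono order_trans)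
    moreover have "energy (u (Suc t)) = energy (u t) - dissipation (u t) / 4"
      using energy_step balanced[of t] unfolding u_Suc balanced_def by blast
    ultimately show ?thesis unfolding q_def by (simp add: algebra_simps)
  qed
  have energy_le: "energy (u t) \<le> q ^ t * energy (u 0)" for t
  proof (induction t)
    case (Suc t)
    have "energy (u (Suc t)) \<le> q * energy (u t)" by (rule decay)
    also have "\<dots> \<le> q * (q ^ t * energy (u 0))" using Suc q(1) by (rule mult_left_mono)
    finally show ?case by (simp add: mult.assoc)
  qed simp
  define c where "c = sqrt (energy (u 0))"
  show thesis
  proof (rule that)
    show "0 \<le> c" "0 \<le> sqrt q" "sqrt q < 1" unfolding c_def using q energy_nonneg by auto
    fix t i j assume "i \<in> agents" "j < n"
    then have "(u t i j)\<^sup>2 \<le> q ^ t * energy (u 0)"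
      using component_sq_le_energy energy_le order_trans by blast
    also have "\<dots> = (c * sqrt q ^ t)\<^sup>2"
    proof -
      have "(sqrt q ^ t)\<^sup>2 = (sqrt q)\<^sup>2 ^ t" by (simp only: power_mult[symmetric] mult.commute)
      then show ?thesis unfolding c_def using q energy_nonneg[of "u 0"] by (simp add: power_mult_distrib)
    qed
    finally have "\<bar>u t i j\<bar> \<le> \<bar>c * sqrt q ^ t\<bar>" by (simp only: abs_le_square_iff)
    moreover have "0 \<le> c * sqrt q ^ t" unfolding c_def using q energy_nonneg[of "u 0"] by simp
    ultimately show "\<bar>X (Suc t) i j - X t i j\<bar> \<le> c * sqrt q ^ t" unfolding u_def by simp
  qed
qed

lemma limit_fixed_point:
  assumes XS: "\<And>t. X (Suc t) = step (X t)" and ranges: "\<And>t. in_ranges (X t)"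
    and lim: "\<And>i j. i \<in> agents \<Longrightarrow> j < n \<Longrightarrow> (\<lambda>t. X t i j) \<longlonglongrightarrow> L i j"
    and i: "i \<in> agents" and j: "j < n"
  shows "fun_mult n (p i) (L (prev i)) j = L i j"
proof -
  have "(\<lambda>t. fun_mult n (p i) (X t (prev i)) j) \<longlonglongrightarrow> fun_mult n (p i) (L (prev i)) j"
    unfolding fun_mult_def using lim prev_in_agents[OF i] by (intro tendsto_sum tendsto_mult_left) simp
  then have "(\<lambda>t. X t i j / 2 + fun_mult n (p i) (X t (prev i)) j / 2)
      \<longlonglongrightarrow> L i j / 2 + fun_mult n (p i) (L (prev i)) j / 2"
    using lim[OF i j] by (intro tendsto_add tendsto_divide tendsto_const) auto
  moreover have "(\<lambda>t. X t i j / 2 + fun_mult n (p i) (X t (prev i)) j / 2) \<longlonglongrightarrow> L i j"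
    using LIMSEQ_Suc[OF lim[OF i j]] unfolding XS step_eq_midpoint[OF ranges i j] .
  ultimately have "L i j / 2 + fun_mult n (p i) (L (prev i)) j / 2 = L i j"
    by (rule LIMSEQ_unique)
  then show ?thesis by simp
qed

lemma fixed_point_constant:
  assumes fixed: "\<And>i j. i \<in> agents \<Longrightarrow> j < n \<Longrightarrow> fun_mult n (p i) (L (prev i)) j = L i j"
    and "i \<in> agents" "j < n"
  shows "L i j = L 1 j"
proof -
  have L: "in_ranges L" unfolding in_ranges_def
  proof (intro ballI allI impI)
    fix i j assume i: "i \<in> agents" and j: "j < n"
    have "fun_mult n (p i) (L i) j = fun_mult n (p i) (fun_mult n (p i) (L (prev i))) j"
      by (rule fun_mult_cong) (use fixed i in simp)
    also have "\<dots> = fun_mult n (p i) (L (prev i)) j"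
      by (rule fun_mult_idempotent[OF p_idempotent[OF i] j])
    also have "\<dots> = L i j" by (rule fixed[OF i j])
    finally show "fun_mult n (p i) (L i) j = L i j" .
  qed
  have "energy (step L) = energy L"
    unfolding energy_def using step_eq_midpoint[OF L] fixed by (intro sum.cong refl fun_dot_cong) auto
  then have "dissipation L = 0" using energy_step[OF L] by simp
  then show ?thesis using assms(2,3) by (rule dissipation_eq_0_imp_constant)
qed

theorem geometric_consensus:
  assumes X0: "in_ranges (X 0)" "supported (X 0)" and XS: "\<And>t. X (Suc t) = step (X t)"
  shows "\<exists>L c r. 0 < c \<and> 0 \<le> r \<and> r < 1 \<and>
    (\<forall>i\<in>agents. \<forall>t. sqrt (\<Sum>j<n. (X t i j - L j)\<^sup>2) \<le> c * r ^ t)"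
proof -
  obtain c0 r where r: "0 \<le> c0" "0 \<le> r" "r < 1"
    and incr: "\<And>t i j. i \<in> agents \<Longrightarrow> j < n \<Longrightarrow> \<bar>X (Suc t) i j - X t i j\<bar> \<le> c0 * r ^ t"
    using increments_decay[OF X0 XS] by blast
  define B where "B = c0 / (1 - r)"
  have "\<exists>l. \<forall>t. \<bar>X t i j - l\<bar> \<le> B * r ^ t" if "i \<in> agents" "j < n" for i j
    unfolding B_def by (rule geometric_increments_imp_geometric_convergence[OF r(2,3) incr[OF that]])
  then have "\<forall>i j. \<exists>l. i \<in> agents \<and> j < n \<longrightarrow> (\<forall>t. \<bar>X t i j - l\<bar> \<le> B * r ^ t)"
    by blast
  then obtain L where L: "\<And>i j t. i \<in> agents \<Longrightarrow> j < n \<Longrightarrow> \<bar>X t i j - L i j\<bar> \<le> B * r ^ t"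
    by metis
  have lim: "(\<lambda>t. X t i j) \<longlonglongrightarrow> L i j" if "i \<in> agents" "j < n" for i j
    using LIMSEQ_of_geometric_bound[OF r(2,3) L[OF that]] .
  have fixed: "fun_mult n (p i) (L (prev i)) j = L i j" if "i \<in> agents" "j < n" for i j
    using limit_fixed_point[OF XS in_ranges_iterates[OF X0(1) XS] lim that] .
  have const: "L i j = L 1 j" if "i \<in> agents" "j < n" for i j
    using fixed that by (rule fixed_point_constant)
  have bound: "sqrt (\<Sum>j<n. (X t i j - L 1 j)\<^sup>2) \<le> (sqrt n * B + 1) * r ^ t"
    if i: "i \<in> agents" for i t
  proof -
    have "(X t i j - L 1 j)\<^sup>2 \<le> (B * r ^ t)\<^sup>2" if j: "j < n" for j
    proof -
      have "\<bar>X t i j - L 1 j\<bar> \<le> B * r ^ t" using L[OF i j] const[OF i j] by simp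
      from power_mono[OF this abs_ge_zero, of 2] show ?thesis by simp
    qed
    then have "(\<Sum>j<n. (X t i j - L 1 j)\<^sup>2) \<le> (\<Sum>j<n. (B * r ^ t)\<^sup>2)"
      by (intro sum_mono) simp
    then have "sqrt (\<Sum>j<n. (X t i j - L 1 j)\<^sup>2) \<le> sqrt (n * (B * r ^ t)\<^sup>2)"
      by (intro real_sqrt_le_mono) simp
    also have "\<dots> = sqrt n * (B * r ^ t)" using r unfolding B_def by (simp add: real_sqrt_mult)
    also have "\<dots> \<le> (sqrt n * B + 1) * r ^ t" using zero_le_power[OF r(2), of t] by (simp add: algebra_simps)
    finally show ?thesis .
  qed
  have "0 < sqrt n * B + 1" using r unfolding B_def by (simp add: add_nonneg_pos)
  then show ?thesis using r(2,3) bound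
    by (intro exI[of _ "L 1"] exI[of _ "sqrt n * B + 1"] exI[of _ r]) auto
qed

end


locale projection_cycle =
  fixes n m :: nat and C :: "nat \<Rightarrow> real mat"
  assumes m_ge_2: "2 \<le> m"
    and C_full_rank: "\<forall>i\<in>{1..m}. dim_col (C i) = n \<and> full_row_rank (C i)"
begin

lemma
  assumes "i \<in> {1..m}"
  shows proj_mat_C_carrier: "proj_mat (C i) \<in> carrier_mat n n"
    and proj_mat_C_symmetric: "transpose_mat (proj_mat (C i)) = proj_mat (C i)"
    and proj_mat_C_idempotent: "proj_mat (C i) * proj_mat (C i) = proj_mat (C i)"
proof -
  have C: "C i \<in> carrier_mat (dim_row (C i)) n" using C_full_rank assms by auto
  have "full_row_rank (C i)" using C_full_rank assms by auto
  then show "proj_mat (C i) \<in> carrier_mat n n" "transpose_mat (proj_mat (C i)) = proj_mat (C i)"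
    "proj_mat (C i) * proj_mat (C i) = proj_mat (C i)"
    using proj_mat_carrier proj_mat_symmetric proj_mat_idempotent C by blast+
qed

sublocale cyclic_projections n m "\<lambda>i j l. proj_mat (C i) $$ (j, l)"
proof
  show "2 \<le> m" by (rule m_ge_2)
  fix i j l assume "i \<in> {1..m}" "j < n" "l < n"
  then show "proj_mat (C i) $$ (j, l) = proj_mat (C i) $$ (l, j)"
    using proj_mat_C_symmetric proj_mat_C_carrier by (metis carrier_matD index_transpose_mat(1))
next
  fix i j k assume i: "i \<in> {1..m}" and "j < n" "k < n"
  then have "(proj_mat (C i) * proj_mat (C i)) $$ (j, k)
      = (\<Sum>l<n. proj_mat (C i) $$ (j, l) * proj_mat (C i) $$ (l, k))"
    using proj_mat_C_carrier[OF i] by (simp add: scalar_prod_def atLeast0LessThan)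
  then show "(\<Sum>l<n. proj_mat (C i) $$ (j, l) * proj_mat (C i) $$ (l, k)) = proj_mat (C i) $$ (j, k)"
    using proj_mat_C_idempotent[OF i] by simp
qed

definition coords :: "(nat \<Rightarrow> nat \<Rightarrow> real vec) \<Rightarrow> nat \<Rightarrow> nat \<Rightarrow> nat \<Rightarrow> real" where
  "coords x t = (\<lambda>i j. if i \<in> agents \<and> j < n then x i t $ j else 0)"

context
  fixes x :: "nat \<Rightarrow> nat \<Rightarrow> real vec"
  assumes init: "\<forall>i\<in>agents. x i 0 \<in> carrier_vec n \<and> x i 0 \<in> mat_image (proj_mat (C i))"
    and dyn: "\<forall>i\<in>agents. \<forall>t. x i (Suc t) =
               x i t - (1/2) \<cdot>\<^sub>v (proj_mat (C i) *\<^sub>v (x i t - x (prev i) t))"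
begin

lemma state_carrier: "i \<in> agents \<Longrightarrow> x i t \<in> carrier_vec n"
proof (induction t arbitrary: i)
  case (Suc t)
  have "x i t \<in> carrier_vec n" "x (prev i) t \<in> carrier_vec n"
    using Suc prev_in_agents by auto
  then show ?case using dyn Suc.prems proj_mat_C_carrier[OF Suc.prems] by auto
qed (use init in auto)

lemma coords_Suc: "coords x (Suc t) = step (coords x t)"
proof (intro ext)
  fix i j
  show "coords x (Suc t) i j = step (coords x t) i j"
  proof (cases "i \<in> agents \<and> j < n")
    case True
    then have i: "i \<in> agents" and j: "j < n" by auto
    note carrier = state_carrier[OF i, of t] state_carrier[OF prev_in_agents[OF i], of t]
    have "coords x (Suc t) i j = x i (Suc t) $ j" using i j by (simp add: coords_def)
    also have "\<dots> = x i t $ j - 1/2 * (proj_mat (C i) *\<^sub>v (x i t - x (prev i) t)) $ j"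
      using dyn i j carrier proj_mat_C_carrier[OF i] by auto
    also have "(proj_mat (C i) *\<^sub>v (x i t - x (prev i) t)) $ j
        = fun_mult n (\<lambda>j l. proj_mat (C i) $$ (j, l)) (\<lambda>l. coords x t i l - coords x t (prev i) l) j"
      using carrier proj_mat_C_carrier[OF i] i j prev_in_agents[OF i]
      unfolding fun_mult_def coords_def by (subst mult_mat_vec_index_sum) (auto intro: sum.cong)
    also have "x i t $ j - 1/2 * \<dots> = step (coords x t) i j"
      using i j by (simp add: step_def coords_def)
    finally show ?thesis .
  qed (auto simp: coords_def step_def)
qed

lemma in_ranges_coords_0: "in_ranges (coords x 0)"
  unfolding in_ranges_def
proof (intro ballI allI impI)
  fix i j assume i: "i \<in> agents" and j: "j < n"
  have "x i 0 \<in> mat_image (proj_mat (C i))" using init i by blast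
  then obtain y where "y \<in> carrier_vec (dim_col (proj_mat (C i)))" "x i 0 = proj_mat (C i) *\<^sub>v y"
    unfolding mat_image_def by blast
  then have y: "y \<in> carrier_vec n" "x i 0 = proj_mat (C i) *\<^sub>v y"
    using proj_mat_C_carrier[OF i] by auto
  then have "proj_mat (C i) *\<^sub>v x i 0 = x i 0"
    using proj_mat_C_idempotent[OF i] proj_mat_C_carrier[OF i] by (metis assoc_mult_mat_vec)
  moreover have "fun_mult n (\<lambda>j l. proj_mat (C i) $$ (j, l)) (coords x 0 i) j
      = (proj_mat (C i) *\<^sub>v x i 0) $ j"
    using i j state_carrier[OF i] proj_mat_C_carrier[OF i]
    unfolding fun_mult_def coords_def by (subst mult_mat_vec_index_sum) (auto intro: sum.cong)
  ultimately show "fun_mult n (\<lambda>j l. proj_mat (C i) $$ (j, l)) (coords x 0 i) j = coords x 0 i j"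
    using i j by (simp add: coords_def)
qed

lemma geometric_vec_consensus:
  "\<exists>xs c \<rho>. xs \<in> carrier_vec n \<and> c > 0 \<and> 0 \<le> \<rho> \<and> \<rho> < 1 \<and>
     (\<forall>i\<in>agents. \<forall>t. vnorm (x i t - xs) \<le> c * \<rho> ^ t)"
proof -
  have supp: "supported (coords x 0)" unfolding supported_def coords_def by auto
  obtain L c r where "0 < c" "0 \<le> r" "r < 1"
    and bound: "\<forall>i\<in>agents. \<forall>t. sqrt (\<Sum>j<n. (coords x t i j - L j)\<^sup>2) \<le> c * r ^ t"
    using geometric_consensus[OF in_ranges_coords_0 supp coords_Suc] by blast
  have "vnorm (x i t - vec n L) = sqrt (\<Sum>j<n. (coords x t i j - L j)\<^sup>2)"
    if "i \<in> agents" for i t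
    unfolding vnorm_def coords_def using state_carrier[OF that] that by (auto intro!: sum.cong)
  then have "\<forall>i\<in>agents. \<forall>t. vnorm (x i t - vec n L) \<le> c * r ^ t" using bound by simp
  moreover have "vec n L \<in> carrier_vec n" by simp
  ultimately show ?thesis using \<open>0 < c\<close> \<open>0 \<le> r\<close> \<open>r < 1\<close> by blast
qed

end

end

theorem proposition1:
  fixes m n :: nat and C :: "nat \<Rightarrow> real mat" and x :: "nat \<Rightarrow> nat \<Rightarrow> real vec"
  assumes m2: "m \<ge> 2"
    and C: "\<forall>i\<in>{1..m}. dim_col (C i) = n \<and> full_row_rank (C i)"
    and init: "\<forall>i\<in>{1..m}. x i 0 \<in> carrier_vec n \<and> x i 0 \<in> mat_image (proj_mat (C i))"
    and dyn: "\<forall>i\<in>{1..m}. \<forall>t. x i (Suc t) =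
               x i t - (1/2) \<cdot>\<^sub>v (proj_mat (C i) *\<^sub>v (x i t - x (cyc_prev m i) t))"
  shows "\<exists>xs c \<rho>. xs \<in> carrier_vec n \<and> c > 0 \<and> 0 \<le> \<rho> \<and> \<rho> < 1 \<and>
           (\<forall>i\<in>{1..m}. \<forall>t. vnorm (x i t - xs) \<le> c * \<rho> ^ t)"
proof -
  interpret projection_cycle n m C using m2 C by unfold_locales
  show ?thesis using geometric_vec_consensus[OF init dyn] .
qed

end
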